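(* Let $\Omega$ be a triangulation of a planar domain whose vertex set $V$ is in general position. Label the edges of $\Omega$ as terminal-edges, internal-edges and frontier-edges (with boundary edges counted as frontier-edges). Then every vertex $v \in V$ is an endpoint of at least one frontier-edge or barrier-edge. Equivalently, there is no vertex of $\Omega$ all of whose incident edges are internal-edges, i.e. there are no isolated interior points of terminal-edge regions.
   Context: Let $\Omega$ be a triangulation of a planar domain. Here "general position" is taken to mean that the three edges of every triangle of $\Omega$ have pairwise distinct lengths, so every triangle has a unique longest edge. For an edge $e$ of $\Omega$, the labels are as follows. - If $e$ is shared by two triangles $t_1,t_2$: - $e$ is a terminal-edge if it is the longest edge of both $t_1$ and $t_2$; - $e$ is a frontier-edge if it is the longest edge of neither $t_1$ nor $t_2$; - $e$ is an internal-edge if it is the longest edge of exactly one of $t_1,t_2$. - If $e$ belongs to only one triangle, it is a boundary edge and is treated as a frontier-edge. The Longest-edge propagation path $\mathrm{Lepp}(t_0)$ of a triangle $t_0$ is the sequence $t_0,t_1,\dots,t_l$ in which $t_i$ is the neighbor of $t_{i-1}$ across the longest edge of $t_{i-1}$. The sequence stops when that longest edge is a terminal-edge (or a boundary edge); this edge is the terminal-edge of $\mathrm{Lepp}(t_0)$. A terminal-edge region is the union of all triangles whose Lepp has the same terminal-edge. Terminal-edge regions cover the domain without overlapping. A barrier-edge is a frontier-edge lying in the interior of a terminal-edge region, i.e. both triangles sharing it belong to the same terminal-edge region. *)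

theory Defs
  imports "HOL-Analysis.Analysis"
begin

text \<open>Points of the plane are complex numbers. A triangle is the set of its three
vertices; an edge is the set of its two endpoints.\<close>

definition triangulation :: "complex set set \<Rightarrow> bool" where
  "triangulation T \<longleftrightarrow>
     finite T \<and>
     (\<forall>t\<in>T. card t = 3 \<and> \<not> collinear t) \<and>
     (\<forall>t1\<in>T. \<forall>t2\<in>T. convex hull t1 \<inter> convex hull t2 = convex hull (t1 \<inter> t2)) \<and>
     (\<forall>e. card e = 2 \<longrightarrow> card {t\<in>T. e \<subseteq> t} \<le> 2)"

definition edge_length :: "complex set \<Rightarrow> real" where
  "edge_length e = (SOME d. \<exists>a b. e = {a, b} \<and> d = dist a b)"

definition tri_edge :: "complex set \<Rightarrow> complex set \<Rightarrow> bool" where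
  "tri_edge t e \<longleftrightarrow> e \<subseteq> t \<and> card e = 2"

definition general_position :: "complex set set \<Rightarrow> bool" where
  "general_position T \<longleftrightarrow>
     (\<forall>t\<in>T. \<forall>e1 e2. tri_edge t e1 \<and> tri_edge t e2 \<and> e1 \<noteq> e2
        \<longrightarrow> edge_length e1 \<noteq> edge_length e2)"

definition is_longest :: "complex set \<Rightarrow> complex set \<Rightarrow> bool" where
  "is_longest t e \<longleftrightarrow> tri_edge t e \<and>
     (\<forall>e'. tri_edge t e' \<and> e' \<noteq> e \<longrightarrow> edge_length e' < edge_length e)"

definition is_edge :: "complex set set \<Rightarrow> complex set \<Rightarrow> bool" where
  "is_edge T e \<longleftrightarrow> (\<exists>t\<in>T. tri_edge t e)"

definition tris :: "complex set set \<Rightarrow> complex set \<Rightarrow> complex set set" where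
  "tris T e = {t\<in>T. e \<subseteq> t}"

definition boundary_edge :: "complex set set \<Rightarrow> complex set \<Rightarrow> bool" where
  "boundary_edge T e \<longleftrightarrow> is_edge T e \<and> card (tris T e) = 1"

definition terminal_edge :: "complex set set \<Rightarrow> complex set \<Rightarrow> bool" where
  "terminal_edge T e \<longleftrightarrow> is_edge T e \<and> card (tris T e) = 2 \<and>
     (\<forall>t\<in>tris T e. is_longest t e)"

definition internal_edge :: "complex set set \<Rightarrow> complex set \<Rightarrow> bool" where
  "internal_edge T e \<longleftrightarrow> is_edge T e \<and> card (tris T e) = 2 \<and>
     card {t\<in>tris T e. is_longest t e} = 1"

definition frontier_edge :: "complex set set \<Rightarrow> complex set \<Rightarrow> bool" where
  "frontier_edge T e \<longleftrightarrow> is_edge T e \<and>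
     (card (tris T e) = 1 \<or> (card (tris T e) = 2 \<and> (\<forall>t\<in>tris T e. \<not> is_longest t e)))"

definition lepp :: "complex set set \<Rightarrow> complex set list \<Rightarrow> bool" where
  "lepp T ts \<longleftrightarrow> ts \<noteq> [] \<and> set ts \<subseteq> T \<and>
     (\<forall>i. Suc i < length ts \<longrightarrow>
        (\<exists>e. is_longest (ts ! i) e \<and> internal_edge T e \<and>
             e \<subseteq> ts ! Suc i \<and> ts ! Suc i \<noteq> ts ! i)) \<and>
     (\<exists>e. is_longest (last ts) e \<and> (terminal_edge T e \<or> boundary_edge T e))"

definition lepp_terminal_edge :: "complex set set \<Rightarrow> complex set \<Rightarrow> complex set \<Rightarrow> bool" where
  "lepp_terminal_edge T t0 e \<longleftrightarrow>
     (\<exists>ts. lepp T ts \<and> hd ts = t0 \<and> is_longest (last ts) e)"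

definition terminal_edge_region :: "complex set set \<Rightarrow> complex set \<Rightarrow> complex set set" where
  "terminal_edge_region T e = {t\<in>T. lepp_terminal_edge T t e}"

definition barrier_edge :: "complex set set \<Rightarrow> complex set \<Rightarrow> bool" where
  "barrier_edge T e \<longleftrightarrow> frontier_edge T e \<and> card (tris T e) = 2 \<and>
     (\<exists>e'. tris T e \<subseteq> terminal_edge_region T e')"

end

theory Submission
  imports Defs
begin

text \<open>The shortest edge \<open>{v, w}\<close> incident to a vertex \<open>v\<close> is a frontier edge: a triangle
  containing it has a third vertex \<open>x\<close>, and \<open>{v, x}\<close> is an edge at \<open>v\<close> that is no shorter,
  so \<open>{v, w}\<close> is not the longest edge of that triangle.\<close>

lemma edge_length_doubleton: "edge_length {a, b} = dist a b"
proof -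
  have "\<exists>a' b'. {a, b} = {a', b'} \<and> edge_length {a, b} = dist a' b'"
    unfolding edge_length_def by (rule someI_ex) blast
  then obtain a' b' where "{a, b} = {a', b'}" "edge_length {a, b} = dist a' b'"
    by blast
  then show ?thesis by (auto simp: doubleton_eq_iff dist_commute)
qed

lemma triangulation_card_triangle:
  "triangulation T \<Longrightarrow> t \<in> T \<Longrightarrow> card t = 3"
  unfolding triangulation_def by blast

lemma triangulation_finite_vertices:
  assumes "triangulation T"
  shows "finite (\<Union>T)"
proof -
  have "finite T" using assms unfolding triangulation_def by blast
  moreover have "finite t" if "t \<in> T" for t
    using triangulation_card_triangle[OF assms that] by (intro card_ge_0_finite) simp
  ultimately show ?thesis by blast
qed

lemma card_3_third_element:
  assumes "card t = 3" "v \<in> t" "w \<in> t"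
  obtains x where "x \<in> t" "x \<noteq> v" "x \<noteq> w"
  using assms by (auto simp: card_3_iff)

lemma longest_edge_dominates:
  assumes "is_longest t {v, w}" "x \<in> t" "x \<noteq> v" "x \<noteq> w"
  shows "dist v x < dist v w"
proof -
  have "v \<in> t" using assms(1) unfolding is_longest_def tri_edge_def by blast
  then have "tri_edge t {v, x}" "{v, x} \<noteq> {v, w}"
    using assms(2-4) by (auto simp: tri_edge_def doubleton_eq_iff)
  then show ?thesis
    using assms(1) unfolding is_longest_def by (auto simp: edge_length_doubleton)
qed

lemma shortest_edge_at_vertex_not_longest:
  assumes "card t = 3" "v \<in> t" "w \<in> t"
    and "\<And>x. x \<in> t \<Longrightarrow> x \<noteq> v \<Longrightarrow> dist v w \<le> dist v x"
  shows "\<not> is_longest t {v, w}"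
proof
  assume "is_longest t {v, w}"
  obtain x where "x \<in> t" "x \<noteq> v" "x \<noteq> w"
    using card_3_third_element assms(1-3) .
  with \<open>is_longest t {v, w}\<close> assms(4) show False
    by (fastforce dest: longest_edge_dominates)
qed

lemma frontier_edgeI:
  assumes "triangulation T" "is_edge T e" "\<And>t. t \<in> tris T e \<Longrightarrow> \<not> is_longest t e"
  shows "frontier_edge T e"
proof -
  obtain t where "t \<in> tris T e" "card e = 2"
    using assms(2) unfolding is_edge_def tri_edge_def tris_def by blast
  moreover have "finite (tris T e)"
    using assms(1) unfolding triangulation_def tris_def by simp
  ultimately have "card (tris T e) \<ge> 1"
    by (auto simp: Suc_le_eq card_gt_0_iff)
  moreover have "card (tris T e) \<le> 2"
    using assms(1) \<open>card e = 2\<close> unfolding triangulation_def tris_def by blast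
  ultimately show ?thesis
    using assms(2,3) unfolding frontier_edge_def by auto
qed

lemma nearest_neighbour_exists:
  assumes "triangulation T" "v \<in> \<Union>T"
  obtains t w where "t \<in> T" "v \<in> t" "w \<in> t" "w \<noteq> v"
    and "\<And>t' x. t' \<in> T \<Longrightarrow> v \<in> t' \<Longrightarrow> x \<in> t' \<Longrightarrow> x \<noteq> v \<Longrightarrow> dist v w \<le> dist v x"
proof -
  define W where "W = {x. \<exists>t\<in>T. v \<in> t \<and> x \<in> t \<and> x \<noteq> v}"
  have "finite W"
    using triangulation_finite_vertices[OF assms(1)] unfolding W_def
    by (rule finite_subset[rotated]) blast
  moreover have "W \<noteq> {}"
  proof -
    obtain t where t: "t \<in> T" "v \<in> t" using assms(2) by blast
    then obtain x where "x \<in> t" "x \<noteq> v"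
      using card_3_third_element[of t v v] triangulation_card_triangle[OF assms(1)] by metis
    with t show ?thesis unfolding W_def by blast
  qed
  ultimately obtain w where "is_arg_min (dist v) (\<lambda>x. x \<in> W) w"
    using ex_is_arg_min_if_finite by blast
  then show ?thesis
    using that unfolding is_arg_min_linorder W_def by blast
qed

theorem theorem1:
  fixes T :: "complex set set" and v :: complex
  assumes "triangulation T"
    and "general_position T"
    and "v \<in> \<Union>T"
  shows "\<exists>e. v \<in> e \<and> (frontier_edge T e \<or> barrier_edge T e)"
proof -
  obtain t w where wt: "t \<in> T" "v \<in> t" "w \<in> t" "w \<noteq> v"
    and nearest: "\<And>t' x. t' \<in> T \<Longrightarrow> v \<in> t' \<Longrightarrow> x \<in> t' \<Longrightarrow> x \<noteq> v \<Longrightarrow> dist v w \<le> dist v x"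
    using nearest_neighbour_exists[OF assms(1,3)] by metis
  have "is_edge T {v, w}"
    unfolding is_edge_def tri_edge_def using wt by auto
  moreover have "\<not> is_longest t' {v, w}" if "t' \<in> tris T {v, w}" for t'
  proof -
    have "t' \<in> T" "v \<in> t'" "w \<in> t'" using that unfolding tris_def by auto
    then show ?thesis
      by (intro shortest_edge_at_vertex_not_longest triangulation_card_triangle[OF assms(1)] nearest)
  qed
  ultimately have "frontier_edge T {v, w}"
    by (rule frontier_edgeI[OF assms(1)])
  then show ?thesis by blast
qed

end
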